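(* Let $(T,C,K,R)$ be an interval knapsack covering instance, $y\in[0,1]^T$, $S^+=\{s\in[T]:y_s=1\}$, and $\tilde R_{a,b}:=\max\{R_{a,b}-C(S^+\cap(a,b]),0\}$ for every interval $(a,b]$ over $[T]$. Assume that for every interval $(a,b]$ with $\tilde R_{a,b}>0$, either $\sum_{s\in(a,b]\setminus S^+}\min\{C_s,\tilde R_{a,b}\}y_s\ge10\tilde R_{a,b}$ or $\sum_{s\in(a,b]\setminus S^+:C_s\ge\tilde R_{a,b}}y_s\ge6$. For every interval $(a,b]$ define $$\tilde R'_{a,b}:=\sup\Big\{W\ge0:\ \sum_{s\in(a,b]\setminus S^+}\min\{C_s,W\}y_s\ge2W\ \text{ or }\ \sum_{s\in(a,b]\setminus S^+:C_s\ge W}y_s\ge1\Big\}.$$ Construct a family $\mathcal S$ of intervals by the recursive procedure $P(a,b)$ started as $P(0,T)$ with $\mathcal S=\emptyset$: $P(a,b)$ adds $(a,b]$ to $\mathcal S$, and if $a+1<b$ it picks some $c\in(a,b)$ maximizing $\min\{\tilde R'_{a,c},\tilde R'_{c,b}\}$ and calls $P(a,c)$ and $P(c,b)$. Then for every interval $(a,b]$ with $\tilde R_{a,b}>0$ there exists $(a',b']\in\mathcal S$ with $(a',b']\subseteq(a,b]$ and $\tilde R'_{a',b'}\ge\tilde R_{a,b}$.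
   Context: For integers $a<b$, $(a,b]$ denotes the set of integers $\{a+1,\dots,b\}$; an interval over $[T]$ is $(a,b]$ with integers $0\le a<b\le T$. For $S\subseteq[T]$, $C(S)=\sum_{s\in S}C_s$. An interval knapsack covering instance $(T,C,K,R)$ consists of knapsacks $[T]$, each $s$ with capacity $C_s>0$ and cost $K_s\ge0$, and a requirement $R_{a,b}\ge0$ for every interval $(a,b]$ over $[T]$. *)

theory Defs
  imports Main "HOL-Library.Extended_Real" Complex_Main
begin

(* Knapsacks are [T] = {1..T}; an interval (a,b] is the pair (a,b), with set {a<..b}. *)

definition Splus :: "nat \<Rightarrow> (nat \<Rightarrow> real) \<Rightarrow> nat set" where
  "Splus T y = {s \<in> {1..T}. y s = 1}"

definition Rtil :: "nat \<Rightarrow> (nat \<Rightarrow> real) \<Rightarrow> (nat \<Rightarrow> nat \<Rightarrow> real) \<Rightarrow> (nat \<Rightarrow> real)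
                     \<Rightarrow> nat \<Rightarrow> nat \<Rightarrow> real" where
  "Rtil T C R y a b = max (R a b - sum C (Splus T y \<inter> {a<..b})) 0"

definition Rprime :: "nat \<Rightarrow> (nat \<Rightarrow> real) \<Rightarrow> (nat \<Rightarrow> real) \<Rightarrow> nat \<Rightarrow> nat \<Rightarrow> real" where
  "Rprime T C y a b = Sup {W. W \<ge> 0 \<and>
      ((\<Sum>s\<in>{a<..b} - Splus T y. min (C s) W * y s) \<ge> 2 * W \<or>
       (\<Sum>s\<in>{s\<in>{a<..b} - Splus T y. C s \<ge> W}. y s) \<ge> 1)}"

(* proc T C y a b S: some run of the recursive procedure P(a,b) (with arbitrary choice of
   a maximizing split point c) adds exactly the intervals in S. *)
inductive proc :: "nat \<Rightarrow> (nat \<Rightarrow> real) \<Rightarrow> (nat \<Rightarrow> real) \<Rightarrow> nat \<Rightarrow> nat \<Rightarrow> (nat \<times> nat) set \<Rightarrow> bool"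
  for T C y where
  leaf: "a < b \<Longrightarrow> \<not> (a + 1 < b) \<Longrightarrow> proc T C y a b {(a, b)}"
| split: "a + 1 < b \<Longrightarrow> a < c \<Longrightarrow> c < b \<Longrightarrow>
     (\<forall>d. a < d \<and> d < b \<longrightarrow>
        min (Rprime T C y a d) (Rprime T C y d b) \<le> min (Rprime T C y a c) (Rprime T C y c b)) \<Longrightarrow>
     proc T C y a c S1 \<Longrightarrow> proc T C y c b S2 \<Longrightarrow>
     proc T C y a b (insert (a, b) (S1 \<union> S2))"

end

theory Submission
  imports Defs
begin

text \<open>
  Fix \<open>(a,b]\<close> and put \<open>W = R~(a,b)\<close>. Either alternative of the hypothesis says that
  \<open>(a,b]\<close> has mass at least \<open>4V + 2U\<close> for a weight \<open>w\<close> supported outside \<open>S\<^sup>+\<close> with values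
  in \<open>[0,U]\<close> such that every interval of mass at least \<open>V\<close> has \<open>R' \<ge> W\<close>: take
  \<open>w s = min (C s) W * y s\<close> with \<open>V = 2W\<close>, \<open>U = W\<close>, or \<open>w s = y s\<close> on the knapsacks with
  \<open>C s \<ge> W\<close> and \<open>V = U = 1\<close>.
  Walk down the recursion tree from the root while the split point misses \<open>(a,b)\<close>. When
  it hits, one half of \<open>(a,b]\<close> keeps mass \<open>2V + U\<close> and shares an endpoint with the child
  containing it. Such an aligned interval can be cut into two pieces of mass \<open>V\<close>; that cut
  of the current node gives \<open>min R' \<ge> W\<close>, so by maximality of the chosen split both
  children have \<open>R' \<ge> W\<close>, and the child on the aligned side lies inside the interval.
\<close>

lemma proc_root_mem: "proc T C y a b S \<Longrightarrow> (a, b) \<in> S"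
  by (induction rule: proc.induct) auto

lemma le_Rprime:
  assumes Cpos: "\<forall>s\<in>{1..T}. C s > 0"
    and y01: "\<forall>s\<in>{1..T}. 0 \<le> y s \<and> y s \<le> 1"
    and "b \<le> T" and "0 \<le> W"
    and "2 * W \<le> (\<Sum>s\<in>{a<..b} - Splus T y. min (C s) W * y s)
      \<or> 1 \<le> (\<Sum>s\<in>{s\<in>{a<..b} - Splus T y. W \<le> C s}. y s)"
  shows "W \<le> Rprime T C y a b"
proof -
  define I where "I = {a<..b} - Splus T y"
  have I: "0 < C s \<and> 0 \<le> y s \<and> y s \<le> 1" if "s \<in> I" for s
    using that Cpos y01 \<open>b \<le> T\<close> by (auto simp: I_def)
  have bounded: "W' \<le> sum C I"
    if W': "0 \<le> W'" "2 * W' \<le> (\<Sum>s\<in>I. min (C s) W' * y s) \<or> 1 \<le> (\<Sum>s\<in>{s\<in>I. W' \<le> C s}. y s)"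
    for W'
    using W'(2)
  proof
    assume "2 * W' \<le> (\<Sum>s\<in>I. min (C s) W' * y s)"
    also have "\<dots> \<le> sum C I"
    proof (rule sum_mono)
      fix s assume "s \<in> I"
      with I[of s] W'(1) have "min (C s) W' * y s \<le> min (C s) W'"
        by (intro mult_left_le) auto
      then show "min (C s) W' * y s \<le> C s" by linarith
    qed
    finally show ?thesis using W'(1) by linarith
  next
    assume "1 \<le> (\<Sum>s\<in>{s\<in>I. W' \<le> C s}. y s)"
    then obtain s where s: "s \<in> I" "W' \<le> C s"
      by (metis (no_types, lifting) empty_Collect_eq sum.empty zero_less_one not_le)
    have "C s \<le> sum C I"
      by (rule member_le_sum) (use s I in \<open>auto simp: I_def intro: less_imp_le\<close>)
    with s show ?thesis by linarith
  qed
  show ?thesis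
    unfolding Rprime_def I_def[symmetric]
    by (rule cSup_upper) (use assms bounded in \<open>auto simp: I_def intro!: bdd_aboveI\<close>)
qed

lemma sum_greaterThanAtMost_split:
  fixes f :: "nat \<Rightarrow> 'a::comm_monoid_add"
  shows "a \<le> e \<Longrightarrow> e \<le> b \<Longrightarrow> sum f {a<..b} = sum f {a<..e} + sum f {e<..b}"
  by (subst ivl_disj_un_two(6)[symmetric, of a e b]) (auto intro: sum.union_disjoint)

lemma exists_balanced_split:
  fixes w :: "nat \<Rightarrow> real"
  assumes w_le: "\<forall>s\<in>{a<..b}. w s \<le> U" and "0 < V" "0 \<le> U"
    and mass: "2 * V + U \<le> sum w {a<..b}"
  shows "\<exists>e. a < e \<and> e < b \<and> V \<le> sum w {a<..e} \<and> V \<le> sum w {e<..b}"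
proof -
  \<comment> \<open>The shortest prefix of mass \<open>V\<close> overshoots by at most one weight \<open>U\<close>.\<close>
  define e where "e = (LEAST e. V \<le> sum w {a<..e})"
  have "V \<le> sum w {a<..b}" using mass assms by linarith
  then have prefix: "V \<le> sum w {a<..e}" and "e \<le> b"
    unfolding e_def by (auto intro: LeastI Least_le)
  have "a < e"
    using prefix \<open>0 < V\<close> by (cases "a < e") auto
  then obtain e' where e': "e = Suc e'" "a \<le> e'"
    by (cases e) auto
  have "\<not> V \<le> sum w {a<..e'}"
    unfolding e_def by (rule not_less_Least) (simp add: e' e_def[symmetric])
  moreover have "sum w {a<..e} = w e + sum w {a<..e'}"
    using e' by (simp add: atLeastSucAtMost_greaterThanAtMost[symmetric] sum.atLeast_Suc_atMost_Suc_shift)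
  moreover have "w e \<le> U" using w_le \<open>a < e\<close> \<open>e \<le> b\<close> by auto
  ultimately have "sum w {a<..e} < V + U" by linarith
  moreover have "sum w {a<..b} = sum w {a<..e} + sum w {e<..b}"
    using \<open>a < e\<close> \<open>e \<le> b\<close> by (intro sum_greaterThanAtMost_split) auto
  ultimately have suffix: "V \<le> sum w {e<..b}" using mass by linarith
  have "e < b"
    using suffix \<open>0 < V\<close> by (cases "e < b") auto
  with \<open>a < e\<close> prefix suffix show ?thesis by blast
qed

lemma aligned_heavy_interval_contains_node:
  fixes w :: "nat \<Rightarrow> real"
  assumes w: "\<forall>s\<in>{1..T}. 0 \<le> w s \<and> w s \<le> U" and "0 < V" "0 \<le> U"
    and heavy: "\<forall>a b. a < b \<and> b \<le> T \<and> V \<le> sum w {a<..b} \<longrightarrow> W \<le> Rprime T C y a b"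
  shows "proc T C y x z S \<Longrightarrow> x \<le> a \<Longrightarrow> a < b \<Longrightarrow> b \<le> z \<Longrightarrow> z \<le> T \<Longrightarrow> x = a \<or> z = b
    \<Longrightarrow> 2 * V + U \<le> sum w {a<..b}
    \<Longrightarrow> \<exists>(a', b')\<in>S. {a'<..b'} \<subseteq> {a<..b} \<and> W \<le> Rprime T C y a' b'"
proof (induction arbitrary: a b rule: proc.induct)
  case (leaf x z)
  then have "x = a" "z = b" by auto
  moreover have "W \<le> Rprime T C y a b"
    using heavy leaf.prems \<open>0 < V\<close> \<open>0 \<le> U\<close> by auto
  ultimately show ?case by auto
next
  case (split x z c S1 S2)
  consider (left) "b \<le> c" | (right) "c \<le> a" | (inside) "a < c" "c < b" by linarith
  then show ?case
  proof cases
    case left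
    with split.hyps(3) split.prems(5) have "x = a" by linarith
    with left split.hyps(3) split.prems have "\<exists>(a', b')\<in>S1. {a'<..b'} \<subseteq> {a<..b} \<and> W \<le> Rprime T C y a' b'"
      by (intro split.IH(1)) auto
    then show ?thesis by auto
  next
    case right
    with split.hyps(2) split.prems(5) have "z = b" by linarith
    with right split.prems have "\<exists>(a', b')\<in>S2. {a'<..b'} \<subseteq> {a<..b} \<and> W \<le> Rprime T C y a' b'"
      by (intro split.IH(2)) auto
    then show ?thesis by auto
  next
    case inside
    obtain e where e: "a < e" "e < b" "V \<le> sum w {a<..e}" "V \<le> sum w {e<..b}"
      using exists_balanced_split[of a b w U V] w split.prems \<open>0 < V\<close> \<open>0 \<le> U\<close> by auto
    have "sum w {a<..e} \<le> sum w {x<..e}" "sum w {e<..b} \<le> sum w {e<..z}"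
      using w split.prems e by (auto intro!: sum_mono2)
    with e split.prems heavy have "W \<le> Rprime T C y x e" "W \<le> Rprime T C y e z"
      by auto
    moreover have "min (Rprime T C y x e) (Rprime T C y e z) \<le> min (Rprime T C y x c) (Rprime T C y c z)"
      using split.hyps(4) e split.prems by auto
    ultimately have "W \<le> Rprime T C y x c" "W \<le> Rprime T C y c z"
      by linarith+
    have "(x, c) \<in> S1" "(c, z) \<in> S2"
      using split.hyps(5,6) by (auto intro: proc_root_mem)
    from split.prems(5) show ?thesis
    proof
      assume "x = a"
      with inside have "{x<..c} \<subseteq> {a<..b}" by auto
      with \<open>(x, c) \<in> S1\<close> \<open>W \<le> Rprime T C y x c\<close> show ?thesis by blast
    next
      assume "z = b"
      with inside have "{c<..z} \<subseteq> {a<..b}" by auto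
      with \<open>(c, z) \<in> S2\<close> \<open>W \<le> Rprime T C y c z\<close> show ?thesis by blast
    qed
  qed
qed

lemma heavy_interval_contains_node:
  fixes w :: "nat \<Rightarrow> real"
  assumes w: "\<forall>s\<in>{1..T}. 0 \<le> w s \<and> w s \<le> U" and "0 < V" "0 \<le> U"
    and heavy: "\<forall>a b. a < b \<and> b \<le> T \<and> V \<le> sum w {a<..b} \<longrightarrow> W \<le> Rprime T C y a b"
  shows "proc T C y x z S \<Longrightarrow> x \<le> a \<Longrightarrow> a < b \<Longrightarrow> b \<le> z \<Longrightarrow> z \<le> T
    \<Longrightarrow> 4 * V + 2 * U \<le> sum w {a<..b}
    \<Longrightarrow> \<exists>(a', b')\<in>S. {a'<..b'} \<subseteq> {a<..b} \<and> W \<le> Rprime T C y a' b'"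
proof (induction arbitrary: a b rule: proc.induct)
  case (leaf x z)
  then have "x = a" "z = b" by auto
  moreover have "W \<le> Rprime T C y a b"
    using heavy leaf.prems \<open>0 < V\<close> \<open>0 \<le> U\<close> by auto
  ultimately show ?case by auto
next
  case (split x z c S1 S2)
  consider (left) "b \<le> c" | (right) "c \<le> a" | (inside) "a < c" "c < b" by linarith
  then show ?case
  proof cases
    case left
    with split.hyps(3) split.prems have "\<exists>(a', b')\<in>S1. {a'<..b'} \<subseteq> {a<..b} \<and> W \<le> Rprime T C y a' b'"
      by (intro split.IH(1)) auto
    then show ?thesis by auto
  next
    case right
    with split.prems have "\<exists>(a', b')\<in>S2. {a'<..b'} \<subseteq> {a<..b} \<and> W \<le> Rprime T C y a' b'"
      by (intro split.IH(2)) auto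
    then show ?thesis by auto
  next
    case inside
    have "sum w {a<..b} = sum w {a<..c} + sum w {c<..b}"
      using inside by (intro sum_greaterThanAtMost_split) auto
    with split.prems consider (left_half) "2 * V + U \<le> sum w {a<..c}" | (right_half) "2 * V + U \<le> sum w {c<..b}"
      by linarith
    then show ?thesis
    proof cases
      case left_half
      with inside split.hyps(3) split.prems
      have "\<exists>(a', b')\<in>S1. {a'<..b'} \<subseteq> {a<..c} \<and> W \<le> Rprime T C y a' b'"
        by (intro aligned_heavy_interval_contains_node[OF w \<open>0 < V\<close> \<open>0 \<le> U\<close> heavy split.hyps(5)]) auto
      moreover have "{a<..c} \<subseteq> {a<..b}" using inside by auto
      ultimately show ?thesis by blast
    next
      case right_half
      with inside split.prems
      have "\<exists>(a', b')\<in>S2. {a'<..b'} \<subseteq> {c<..b} \<and> W \<le> Rprime T C y a' b'"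
        by (intro aligned_heavy_interval_contains_node[OF w \<open>0 < V\<close> \<open>0 \<le> U\<close> heavy split.hyps(6)]) auto
      moreover have "{c<..b} \<subseteq> {a<..b}" using inside by auto
      ultimately show ?thesis by blast
    qed
  qed
qed

lemma exists_node_of_fractional_mass:
  assumes Cpos: "\<forall>s\<in>{1..T}. C s > 0"
    and y01: "\<forall>s\<in>{1..T}. 0 \<le> y s \<and> y s \<le> 1"
    and run: "proc T C y 0 T S" and "a < b" "b \<le> T" "0 < W"
    and "10 * W \<le> (\<Sum>s\<in>{a<..b} - Splus T y. min (C s) W * y s)"
  shows "\<exists>(a', b')\<in>S. {a'<..b'} \<subseteq> {a<..b} \<and> W \<le> Rprime T C y a' b'"
proof -
  define w where "w s = (if s \<in> Splus T y then 0 else min (C s) W * y s)" for s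
  have w_sum: "sum w {a<..b} = (\<Sum>s\<in>{a<..b} - Splus T y. min (C s) W * y s)" for a b
    by (simp add: w_def sum.If_cases Diff_eq)
  have "0 \<le> w s \<and> w s \<le> W" if "s \<in> {1..T}" for s
  proof -
    have "0 \<le> y s" "y s \<le> 1" "0 < C s" using that y01 Cpos by auto
    then have "min (C s) W * y s \<le> min (C s) W"
      using \<open>0 < W\<close> by (intro mult_left_le) auto
    moreover have "0 \<le> min (C s) W * y s"
      using \<open>0 \<le> y s\<close> \<open>0 < C s\<close> \<open>0 < W\<close> by simp
    ultimately show ?thesis by (auto simp: w_def)
  qed
  moreover have "\<forall>a b. a < b \<and> b \<le> T \<and> 2 * W \<le> sum w {a<..b} \<longrightarrow> W \<le> Rprime T C y a b"
    using le_Rprime[OF Cpos y01] \<open>0 < W\<close> by (simp add: w_sum)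
  ultimately show ?thesis
    using heavy_interval_contains_node[of T w W "2 * W"] assms by (simp add: w_sum)
qed

lemma exists_node_of_large_item_mass:
  assumes Cpos: "\<forall>s\<in>{1..T}. C s > 0"
    and y01: "\<forall>s\<in>{1..T}. 0 \<le> y s \<and> y s \<le> 1"
    and run: "proc T C y 0 T S" and "a < b" "b \<le> T" "0 < W"
    and "6 \<le> (\<Sum>s\<in>{s\<in>{a<..b} - Splus T y. W \<le> C s}. y s)"
  shows "\<exists>(a', b')\<in>S. {a'<..b'} \<subseteq> {a<..b} \<and> W \<le> Rprime T C y a' b'"
proof -
  define w where "w s = (if s \<notin> Splus T y \<and> W \<le> C s then y s else 0)" for s
  have w_sum: "sum w {a<..b} = (\<Sum>s\<in>{s\<in>{a<..b} - Splus T y. W \<le> C s}. y s)" for a b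
  proof -
    have "{s\<in>{a<..b} - Splus T y. W \<le> C s} = {s\<in>{a<..b}. s \<notin> Splus T y \<and> W \<le> C s}"
      by auto
    then show ?thesis
      unfolding w_def by (simp only: sum.inter_filter[OF finite_greaterThanAtMost])
  qed
  have "\<forall>s\<in>{1..T}. 0 \<le> w s \<and> w s \<le> 1"
    using y01 by (simp add: w_def)
  moreover have "\<forall>a b. a < b \<and> b \<le> T \<and> 1 \<le> sum w {a<..b} \<longrightarrow> W \<le> Rprime T C y a b"
    using le_Rprime[OF Cpos y01] \<open>0 < W\<close> by (simp add: w_sum)
  ultimately show ?thesis
    using heavy_interval_contains_node[of T w 1 1] assms by (simp add: w_sum)
qed

theorem lemma6:
  fixes T :: nat and C K :: "nat \<Rightarrow> real" and R :: "nat \<Rightarrow> nat \<Rightarrow> real"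
    and y :: "nat \<Rightarrow> real" and S :: "(nat \<times> nat) set"
  assumes Cpos: "\<forall>s\<in>{1..T}. C s > 0"
    and Knn: "\<forall>s\<in>{1..T}. K s \<ge> 0"
    and Rnn: "\<forall>a b. a < b \<and> b \<le> T \<longrightarrow> R a b \<ge> 0"
    and y01: "\<forall>s\<in>{1..T}. 0 \<le> y s \<and> y s \<le> 1"
    and hyp: "\<forall>a b. a < b \<and> b \<le> T \<and> Rtil T C R y a b > 0 \<longrightarrow>
        (\<Sum>s\<in>{a<..b} - Splus T y. min (C s) (Rtil T C R y a b) * y s) \<ge> 10 * Rtil T C R y a b
      \<or> (\<Sum>s\<in>{s\<in>{a<..b} - Splus T y. C s \<ge> Rtil T C R y a b}. y s) \<ge> 6"
    and run: "proc T C y 0 T S"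
  shows "\<forall>a b. a < b \<and> b \<le> T \<and> Rtil T C R y a b > 0 \<longrightarrow>
     (\<exists>(a', b')\<in>S. {a'<..b'} \<subseteq> {a<..b} \<and> Rprime T C y a' b' \<ge> Rtil T C R y a b)"
proof (intro allI impI)
  fix a b assume ab: "a < b \<and> b \<le> T \<and> Rtil T C R y a b > 0"
  define W where "W = Rtil T C R y a b"
  from ab have "0 < W" by (simp add: W_def)
  from hyp[rule_format, of a b] ab
  consider (fractional) "10 * W \<le> (\<Sum>s\<in>{a<..b} - Splus T y. min (C s) W * y s)"
    | (large) "6 \<le> (\<Sum>s\<in>{s\<in>{a<..b} - Splus T y. W \<le> C s}. y s)"
    unfolding W_def by blast
  then have "\<exists>(a', b')\<in>S. {a'<..b'} \<subseteq> {a<..b} \<and> W \<le> Rprime T C y a' b'"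
  proof cases
    case fractional
    with ab \<open>0 < W\<close> show ?thesis by (intro exists_node_of_fractional_mass[OF Cpos y01 run]) auto
  next
    case large
    with ab \<open>0 < W\<close> show ?thesis by (intro exists_node_of_large_item_mass[OF Cpos y01 run]) auto
  qed
  then show "\<exists>(a', b')\<in>S. {a'<..b'} \<subseteq> {a<..b} \<and> Rprime T C y a' b' \<ge> Rtil T C R y a b"
    by (simp only: W_def)
qed

end
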